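(* Let $\lambda$ be an infinite cardinal and let $B_\lambda$ carry any Hausdorff topology making it a topological semigroup. Let $S$ be a topological semigroup such that $S\times S$ is countably compact. Then every continuous homomorphism $h\colon B_\lambda\to S$ is annihilating, i.e. $(s)h=(t)h$ for all $s,t\in B_\lambda$.
   Context: A topological semigroup is a Hausdorff space with a continuous associative multiplication. For a nonzero cardinal $\lambda$, the semigroup of $\lambda\times\lambda$-matrix units is $B_\lambda=(\lambda\times\lambda)\cup\{0\}$ with $(a,b)\cdot(c,d)=(a,d)$ if $b=c$, $(a,b)\cdot(c,d)=0$ if $b\neq c$, and $0$ a zero element. A homomorphism $h\colon S\to T$ is annihilating if it is constant. *)

theory Defs
  imports "HOL-Analysis.Analysis"
begin

definition countably_compact_space :: "'a topology \<Rightarrow> bool" where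
  "countably_compact_space X \<longleftrightarrow>
     (\<forall>\<U>. countable \<U> \<and> (\<forall>U\<in>\<U>. openin X U) \<and> topspace X \<subseteq> \<Union>\<U> \<longrightarrow>
        (\<exists>\<F>. finite \<F> \<and> \<F> \<subseteq> \<U> \<and> topspace X \<subseteq> \<Union>\<F>))"

definition topological_semigroup :: "'a topology \<Rightarrow> ('a \<Rightarrow> 'a \<Rightarrow> 'a) \<Rightarrow> bool" where
  "topological_semigroup X m \<longleftrightarrow>
     Hausdorff_space X \<and>
     (\<forall>x\<in>topspace X. \<forall>y\<in>topspace X. m x y \<in> topspace X) \<and>
     (\<forall>x\<in>topspace X. \<forall>y\<in>topspace X. \<forall>z\<in>topspace X. m (m x y) z = m x (m y z)) \<and>
     continuous_map (prod_topology X X) X (\<lambda>(x, y). m x y)"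

text \<open>The semigroup of \<lambda>\<times>\<lambda>-matrix units over an index set L:
  carrier is Some ` (L \<times> L) together with None (the zero).\<close>
definition B_carrier :: "'a set \<Rightarrow> ('a \<times> 'a) option set" where
  "B_carrier L = Some ` (L \<times> L) \<union> {None}"

fun B_mult :: "('a \<times> 'a) option \<Rightarrow> ('a \<times> 'a) option \<Rightarrow> ('a \<times> 'a) option" where
  "B_mult (Some (a, b)) (Some (c, d)) = (if b = c then Some (a, d) else None)"
| "B_mult _ _ = None"

definition semigroup_hom :: "'a set \<Rightarrow> ('a \<Rightarrow> 'a \<Rightarrow> 'a) \<Rightarrow> 'b set \<Rightarrow> ('b \<Rightarrow> 'b \<Rightarrow> 'b)
    \<Rightarrow> ('a \<Rightarrow> 'b) \<Rightarrow> bool" where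
  "semigroup_hom A mA B mB h \<longleftrightarrow>
     (\<forall>x\<in>A. h x \<in> B) \<and> (\<forall>x\<in>A. \<forall>y\<in>A. h (mA x y) = mB (h x) (h y))"

end

theory Submission
  imports Defs
begin

(* Fix distinct indices a_0, a_1, a_2, ... in the infinite set L and put
   x_n = h(a_0, a_{n+1}), y_n = h(a_{n+1}, a_0), e = h(a_0, a_0), z = h 0.
   Then x_n y_n = e and x_n y_k = z for n ~= k.  Such an "infinite matrix pattern"
   cannot live in a topological semigroup S with S x S countably compact unless e = z:
   a cluster point (p, q) of the sequence (x_n, y_n) satisfies p q = e by joint
   continuity, p y_k = z for every k by continuity of right translations, and hence
   p q = z by continuity of the left translation by p.  Finally, once an idempotent
   (a, a) of B_L is sent to the image of zero, the homomorphism is constant, since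
   every (c, d) factors as (c, a)(a, a)(a, d). *)

lemma countably_compact_cluster_point:
  fixes z :: "nat \<Rightarrow> 'a"
  assumes cc: "countably_compact_space X" and z: "\<And>n. z n \<in> topspace X"
  shows "\<exists>w\<in>topspace X. \<forall>k. w \<in> X closure_of (z ` {k..})"
proof (rule ccontr)
  assume no_cluster: "\<not> ?thesis"
  define U where "U k = topspace X - X closure_of (z ` {k..})" for k :: nat
  have "\<forall>V\<in>range U. openin X V" unfolding U_def by auto
  moreover have "topspace X \<subseteq> \<Union>(range U)" using no_cluster unfolding U_def by auto
  ultimately obtain F where F: "finite F" "F \<subseteq> range U" "topspace X \<subseteq> \<Union>F"
    using cc unfolding countably_compact_space_def by (metis countable_image countableI_type)
  obtain I where I: "finite I" "F = U ` I" using finite_subset_image[OF F(1) F(2)] by blast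
  define K where "K = Max (insert 0 I)"
  \<comment> \<open>The sets \<open>U k\<close> increase with \<open>k\<close>, so the finite subcover is a single \<open>U K\<close>.\<close>
  have U_mono: "U i \<subseteq> U K" if "i \<in> I" for i
  proof -
    have "i \<le> K" unfolding K_def using I(1) that by simp
    then have "z ` {K..} \<subseteq> z ` {i..}" by auto
    then show ?thesis unfolding U_def using closure_of_mono by blast
  qed
  have "z K \<in> X closure_of (z ` {K..})"
    using closure_of_subset[of "z ` {K..}" X] z by auto
  moreover have "z K \<in> \<Union>F" using F(3) z by auto
  ultimately show False using U_mono I(2) unfolding U_def by auto
qed

lemma continuous_map_const_on_closure:
  assumes f: "continuous_map X Y f" and Y: "Hausdorff_space Y" and c: "c \<in> topspace Y"
    and A: "A \<subseteq> topspace X" and const: "\<And>a. a \<in> A \<Longrightarrow> f a = c"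
    and w: "w \<in> X closure_of A"
  shows "f w = c"
proof -
  have "closedin X {u \<in> topspace X. f u \<in> {c}}"
    using closedin_continuous_map_preimage[OF f closedin_Hausdorff_singleton[OF Y c]] .
  moreover have "A \<subseteq> {u \<in> topspace X. f u \<in> {c}}" using A const by auto
  ultimately have "X closure_of A \<subseteq> {u \<in> topspace X. f u \<in> {c}}"
    by (rule closure_of_minimal[rotated])
  then show ?thesis using w by auto
qed

lemma topological_semigroup_right_translation:
  assumes "topological_semigroup T m" and "c \<in> topspace T"
  shows "continuous_map T T (\<lambda>u. m u c)"
proof -
  have "continuous_map T (prod_topology T T) (\<lambda>u. (u, c))"
    using assms(2) by (simp add: continuous_map_paired)
  then show ?thesis
    using continuous_map_compose assms(1) unfolding topological_semigroup_def o_def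
    by fastforce
qed

lemma topological_semigroup_left_translation:
  assumes "topological_semigroup T m" and "c \<in> topspace T"
  shows "continuous_map T T (\<lambda>v. m c v)"
proof -
  have "continuous_map T (prod_topology T T) (\<lambda>v. (c, v))"
    using assms(2) by (simp add: continuous_map_paired)
  then show ?thesis
    using continuous_map_compose assms(1) unfolding topological_semigroup_def o_def
    by fastforce
qed

lemma countably_compact_matrix_pattern:
  fixes x y :: "nat \<Rightarrow> 'a"
  assumes S: "topological_semigroup T m"
    and cc: "countably_compact_space (prod_topology T T)"
    and x: "\<And>n. x n \<in> topspace T" and y: "\<And>n. y n \<in> topspace T"
    and diag: "\<And>n. m (x n) (y n) = e"
    and off_diag: "\<And>n k. n \<noteq> k \<Longrightarrow> m (x n) (y k) = z"
  shows "e = z"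
proof -
  have Hausdorff: "Hausdorff_space T"
    and closed: "\<And>u v. u \<in> topspace T \<Longrightarrow> v \<in> topspace T \<Longrightarrow> m u v \<in> topspace T"
    and mult: "continuous_map (prod_topology T T) T (\<lambda>(u, v). m u v)"
    using S unfolding topological_semigroup_def by auto
  have eT: "e \<in> topspace T" using closed x y diag by metis
  have zT: "z \<in> topspace T" using closed x y off_diag zero_neq_one by metis
  define P where "P = (\<lambda>n. (x n, y n))"
  have P: "P ` {k..} \<subseteq> topspace (prod_topology T T)" for k
    using x y unfolding P_def by auto
  obtain p q where pq: "p \<in> topspace T" "\<And>k. (p, q) \<in> prod_topology T T closure_of (P ` {k..})"
    using countably_compact_cluster_point[OF cc, of P] x y unfolding P_def by fastforce
  have "(\<lambda>(u, v). m u v) w = e" if "w \<in> P ` {0..}" for w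
    using that diag unfolding P_def by auto
  then have "m p q = e"
    using continuous_map_const_on_closure[OF mult Hausdorff eT P _ pq(2)[of 0]] by simp
  moreover have p_y: "m p (y k) = z" for k
  proof -
    have "continuous_map (prod_topology T T) T (\<lambda>(u, v). m u (y k))"
      using continuous_map_compose[OF continuous_map_fst
          topological_semigroup_right_translation[OF S y]]
      by (simp add: o_def case_prod_unfold)
    moreover have "(\<lambda>(u, v). m u (y k)) w = z" if "w \<in> P ` {Suc k..}" for w
      using that off_diag unfolding P_def by fastforce
    ultimately have "(\<lambda>(u, v). m u (y k)) (p, q) = z"
      by (rule continuous_map_const_on_closure[OF _ Hausdorff zT P _ pq(2)[of "Suc k"]])
    then show ?thesis by simp
  qed
  moreover have "m p q = z"
  proof -
    have "continuous_map (prod_topology T T) T (\<lambda>(u, v). m p v)"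
      using continuous_map_compose[OF continuous_map_snd
          topological_semigroup_left_translation[OF S pq(1)]]
      by (simp add: o_def case_prod_unfold)
    moreover have "(\<lambda>(u, v). m p v) w = z" if "w \<in> P ` {0..}" for w
      using that p_y unfolding P_def by auto
    ultimately have "(\<lambda>(u, v). m p v) (p, q) = z"
      by (rule continuous_map_const_on_closure[OF _ Hausdorff zT P _ pq(2)[of 0]])
    then show ?thesis by simp
  qed
  ultimately show ?thesis by simp
qed

lemma B_carrier_memI [simp]:
  "None \<in> B_carrier L" "c \<in> L \<Longrightarrow> d \<in> L \<Longrightarrow> Some (c, d) \<in> B_carrier L"
  unfolding B_carrier_def by auto

text \<open>A homomorphism from \<open>B\<^sub>L\<close> identifying one idempotent \<open>(a, a)\<close> with zero is
  constant, because every \<open>(c, d)\<close> factors as \<open>(c, a)(a, a)(a, d)\<close> and zero absorbs.\<close>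

lemma B_hom_constant_if_idempotent_collapses:
  assumes hom: "semigroup_hom (B_carrier L) B_mult (topspace T) m h"
    and a: "a \<in> L" and collapse: "h (Some (a, a)) = h None"
  shows "\<forall>s\<in>B_carrier L. h s = h None"
proof -
  have hm: "\<And>s t. s \<in> B_carrier L \<Longrightarrow> t \<in> B_carrier L \<Longrightarrow> h (B_mult s t) = m (h s) (h t)"
    using hom unfolding semigroup_hom_def by auto
  have "h (Some (c, d)) = h None" if "c \<in> L" "d \<in> L" for c d
  proof -
    have "h (Some (c, d)) = h (B_mult (B_mult (Some (c, a)) (Some (a, a))) (Some (a, d)))"
      by simp
    also have "\<dots> = m (m (h (Some (c, a))) (h (Some (a, a)))) (h (Some (a, d)))"
      using hm that a by (metis B_carrier_memI(2) B_mult.simps(1))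
    also have "\<dots> = m (m (h (Some (c, a))) (h None)) (h (Some (a, d)))"
      using collapse by simp
    also have "\<dots> = m (h (B_mult (Some (c, a)) None)) (h (Some (a, d)))"
      using hm[of "Some (c, a)" None] that a by (simp del: B_mult.simps)
    also have "\<dots> = h (B_mult (B_mult (Some (c, a)) None) (Some (a, d)))"
      by (rule hm[symmetric]) (simp_all add: that a)
    finally show ?thesis by simp
  qed
  then show ?thesis unfolding B_carrier_def by auto
qed

theorem theorem6:
  fixes L :: "'a set"
    and \<tau> :: "('a \<times> 'a) option topology"
    and T :: "'b topology"
    and m :: "'b \<Rightarrow> 'b \<Rightarrow> 'b"
    and h :: "('a \<times> 'a) option \<Rightarrow> 'b"
  assumes "infinite L"
    and "topspace \<tau> = B_carrier L"
    and "topological_semigroup \<tau> B_mult"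
    and "topological_semigroup T m"
    and "countably_compact_space (prod_topology T T)"
    and "continuous_map \<tau> T h"
    and "semigroup_hom (B_carrier L) B_mult (topspace T) m h"
  shows "\<forall>s\<in>B_carrier L. \<forall>t\<in>B_carrier L. h s = h t"
proof -
  have hT: "\<And>s. s \<in> B_carrier L \<Longrightarrow> h s \<in> topspace T"
   and hm: "\<And>s t. s \<in> B_carrier L \<Longrightarrow> t \<in> B_carrier L \<Longrightarrow> h (B_mult s t) = m (h s) (h t)"
    using assms(7) unfolding semigroup_hom_def by auto
  obtain a :: "nat \<Rightarrow> 'a" where a: "inj a" "\<And>n. a n \<in> L"
    using infinite_countable_subset[OF assms(1)] by blast
  have "h (Some (a 0, a 0)) = h None"
  proof (rule countably_compact_matrix_pattern[OF assms(4,5)])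
    show "h (Some (a 0, a (Suc n))) \<in> topspace T" "h (Some (a (Suc n), a 0)) \<in> topspace T" for n
      using hT a(2) by simp_all
    show "m (h (Some (a 0, a (Suc n)))) (h (Some (a (Suc n), a 0))) = h (Some (a 0, a 0))" for n
      using hm[of "Some (a 0, a (Suc n))" "Some (a (Suc n), a 0)"] a(2) by simp
    show "m (h (Some (a 0, a (Suc n)))) (h (Some (a (Suc k), a 0))) = h None" if "n \<noteq> k" for n k
      using hm[of "Some (a 0, a (Suc n))" "Some (a (Suc k), a 0)"] a that
      by (simp add: inj_eq)
  qed
  then have "\<forall>s\<in>B_carrier L. h s = h None"
    using B_hom_constant_if_idempotent_collapses[OF assms(7)] a(2) by blast
  then show ?thesis by metis
qed

end
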